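(* Every sequential Thiele rule and sequential Phragmén satisfy participation for unrepresented voters. The method of equal shares violates participation for unrepresented voters: there exist a profile $A$, a committee size $k$, and a voter $i\in N_A$ such that $W\cap A_i=\emptyset$ for some (indeed every) $W\in f(A,k)$ but $f(A_{-i},k)\succ_i f(A,k)$, where $f$ is the method of equal shares.
   Context: Candidates form a finite set $C$, $|C|=m>1$. An approval profile $A$ has a nonempty finite voter set $N_A$, each $i\in N_A$ having a nonempty ballot $A_i\subseteq C$; $N_A(c)=\{i\in N_A:c\in A_i\}$, $n=|N_A|$, $A_{-i}$ is $A$ with voter $i$ removed. Committees of size $k\in\{1,\dots,m-1\}$ are $k$-subsets of $C$; an ABC voting rule $f$ returns a nonempty set $f(A,k)$ of committees. Preferences: $W\succsim_i W'$ iff $|W\cap A_i|\ge|W'\cap A_i|$, $W\succ_i W'$ iff $>$. Kelly's extension: $X\succsim_i Y$ iff $W\succsim_i W'$ for all $W\in X,W'\in Y$; $X\succ_i Y$ iff $X\succsim_i Y$ and $W\succ_i W'$ for some $W\in X,W'\in Y$. A rule $f$ satisfies participation for unrepresented voters if $f(A_{-i},k)\not\succ_i f(A,k)$ for all profiles $A$ (with $|N_A|\ge2$), sizes $k$, and voters $i\in N_A$ for which some $W\in f(A,k)$ satisfies $W\cap A_i=\emptyset$. All rules below add candidates sequentially and return every committee obtainable under some tie-breaking. Sequential Thiele rule: given $s:\mathbb N_0\to\mathbb Q$ with $s(0)=0$, $s(1)>0$, $s$ nondecreasing and concave, and $\hat s(A,W)=\sum_{i\in N_A}s(|A_i\cap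 W|)$; having chosen $c_1,\dots,c_\ell$, the next candidate is any $x\notin\{c_1,\dots,c_\ell\}$ maximizing $\hat s(A,\{c_1,\dots,c_\ell,x\})$. Sequential Phragmén: voters' budgets start at 0 and grow at unit rate; as soon as the supporters of an unchosen candidate $c$ have total budget 1, such a $c$ is bought and its supporters' budgets reset to 0; repeat until $k$ are bought. Method of equal shares: initial budgets $k/n$, each candidate costs 1. Phase 1: with current budgets $x_r$, let $C_r$ be unchosen candidates whose supporters have total budget $\ge1$; if nonempty, buy any $c\in C_r$ minimizing $\rho(c)$ where $\sum_{i\in N_A(c)}\min(\rho(c),x_r(i))=1$, and each supporter pays $\min(\rho(c),x_r(i))$; stop when $C_r=\emptyset$. Phase 2: run sequential Phragmén starting from the remaining budgets until $k$ candidates are bought. *)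

theory Defs
  imports Complex_Main
begin

text \<open>Approval profile: voter set N, ballots A (only values on N matter), candidate set C.\<close>
definition valid_profile :: "'a set \<Rightarrow> 'v set \<Rightarrow> ('v \<Rightarrow> 'a set) \<Rightarrow> bool" where
  "valid_profile C N A \<longleftrightarrow> finite N \<and> N \<noteq> {} \<and> (\<forall>i\<in>N. A i \<noteq> {} \<and> A i \<subseteq> C)"

definition supporters :: "'v set \<Rightarrow> ('v \<Rightarrow> 'a set) \<Rightarrow> 'a \<Rightarrow> 'v set" where
  "supporters N A c = {i\<in>N. c \<in> A i}"

definition kelly_strict :: "'a set \<Rightarrow> 'a set set \<Rightarrow> 'a set set \<Rightarrow> bool" where
  "kelly_strict Ai X Y \<longleftrightarrow>
     (\<forall>W\<in>X. \<forall>W'\<in>Y. card (W' \<inter> Ai) \<le> card (W \<inter> Ai)) \<and>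
     (\<exists>W\<in>X. \<exists>W'\<in>Y. card (W' \<inter> Ai) < card (W \<inter> Ai))"

type_synonym ('a, 'v) abc_rule = "'a set \<Rightarrow> 'v set \<Rightarrow> ('v \<Rightarrow> 'a set) \<Rightarrow> nat \<Rightarrow> 'a set set"

text \<open>Participation for unrepresented voters (for the candidate set C); A_{-i} has voter set N - {i}.\<close>
definition participation_unrepresented :: "'a set \<Rightarrow> ('a, 'v) abc_rule \<Rightarrow> bool" where
  "participation_unrepresented C f \<longleftrightarrow>
     (\<forall>N A k i. valid_profile C N A \<longrightarrow> 2 \<le> card N \<longrightarrow> 1 \<le> k \<longrightarrow> k < card C \<longrightarrow> i \<in> N \<longrightarrow>
        (\<exists>W\<in>f C N A k. W \<inter> A i = {}) \<longrightarrow>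
        \<not> kelly_strict (A i) (f C (N - {i}) A k) (f C N A k))"

definition thiele_function :: "(nat \<Rightarrow> rat) \<Rightarrow> bool" where
  "thiele_function s \<longleftrightarrow> s 0 = 0 \<and> s 1 > 0 \<and> (\<forall>j. s j \<le> s (Suc j)) \<and>
     (\<forall>j. s (Suc (Suc j)) - s (Suc j) \<le> s (Suc j) - s j)"

definition thiele_score :: "(nat \<Rightarrow> rat) \<Rightarrow> 'v set \<Rightarrow> ('v \<Rightarrow> 'a set) \<Rightarrow> 'a set \<Rightarrow> rat" where
  "thiele_score s N A W = (\<Sum>i\<in>N. s (card (A i \<inter> W)))"

text \<open>Committees are built as lists (most recent candidate first); every tie-breaking is allowed.\<close>
definition seq_thiele_step :: "(nat \<Rightarrow> rat) \<Rightarrow> 'a set \<Rightarrow> 'v set \<Rightarrow> ('v \<Rightarrow> 'a set) \<Rightarrow> 'a list \<Rightarrow> 'a list \<Rightarrow> bool" where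
  "seq_thiele_step s C N A xs ys \<longleftrightarrow>
     (\<exists>x. x \<in> C - set xs \<and>
          (\<forall>y\<in>C - set xs. thiele_score s N A (insert y (set xs)) \<le> thiele_score s N A (insert x (set xs))) \<and>
          ys = x # xs)"

definition seq_thiele :: "(nat \<Rightarrow> rat) \<Rightarrow> ('a, 'v) abc_rule" where
  "seq_thiele s C N A k = {set xs | xs. (seq_thiele_step s C N A)\<^sup>*\<^sup>* [] xs \<and> length xs = k}"

text \<open>Time until the supporters of c (budgets b growing at unit rate) jointly hold budget 1.\<close>
definition phrag_time :: "'v set \<Rightarrow> ('v \<Rightarrow> 'a set) \<Rightarrow> ('v \<Rightarrow> real) \<Rightarrow> 'a \<Rightarrow> real" where
  "phrag_time N A b c = (1 - (\<Sum>i\<in>supporters N A c. b i)) / real (card (supporters N A c))"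

text \<open>One purchase. Candidates without supporters are never affordable; they are added
  (arbitrarily) only once every remaining candidate is unsupported.\<close>
definition phragmen_step :: "'a set \<Rightarrow> 'v set \<Rightarrow> ('v \<Rightarrow> 'a set) \<Rightarrow>
     ('a list \<times> ('v \<Rightarrow> real)) \<Rightarrow> ('a list \<times> ('v \<Rightarrow> real)) \<Rightarrow> bool" where
  "phragmen_step C N A st st' \<longleftrightarrow>
     (\<exists>c. c \<in> C - set (fst st) \<and> fst st' = c # fst st \<and>
        ((supporters N A c \<noteq> {} \<and>
          (\<forall>d\<in>C - set (fst st). supporters N A d \<noteq> {} \<longrightarrow>
              phrag_time N A (snd st) c \<le> phrag_time N A (snd st) d) \<and>
          snd st' = (\<lambda>i. if i \<in> supporters N A c then 0 else snd st i + phrag_time N A (snd st) c))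
        \<or> ((\<forall>d\<in>C - set (fst st). supporters N A d = {}) \<and> snd st' = snd st)))"

definition seq_phragmen :: "('a, 'v) abc_rule" where
  "seq_phragmen C N A k =
     {set xs | xs b. (phragmen_step C N A)\<^sup>*\<^sup>* ([], \<lambda>_. 0) (xs, b) \<and> length xs = k}"

definition mes_affordable :: "'v set \<Rightarrow> ('v \<Rightarrow> 'a set) \<Rightarrow> ('v \<Rightarrow> real) \<Rightarrow> 'a \<Rightarrow> bool" where
  "mes_affordable N A x c \<longleftrightarrow> 1 \<le> (\<Sum>i\<in>supporters N A c. x i)"

definition mes_rho_ok :: "'v set \<Rightarrow> ('v \<Rightarrow> 'a set) \<Rightarrow> ('v \<Rightarrow> real) \<Rightarrow> 'a \<Rightarrow> real \<Rightarrow> bool" where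
  "mes_rho_ok N A x c \<rho> \<longleftrightarrow> (\<Sum>i\<in>supporters N A c. min \<rho> (x i)) = 1"

text \<open>Phase-1 purchase: c affordable, \<rho> a solution for c that is at most every solution
  \<rho>' for every affordable candidate (so \<rho> = \<rho>(c) is minimal).\<close>
definition mes_step1 :: "'a set \<Rightarrow> 'v set \<Rightarrow> ('v \<Rightarrow> 'a set) \<Rightarrow>
     ('a list \<times> ('v \<Rightarrow> real)) \<Rightarrow> ('a list \<times> ('v \<Rightarrow> real)) \<Rightarrow> bool" where
  "mes_step1 C N A st st' \<longleftrightarrow>
     (\<exists>c \<rho>. c \<in> C - set (fst st) \<and> mes_affordable N A (snd st) c \<and> mes_rho_ok N A (snd st) c \<rho> \<and>
        (\<forall>d\<in>C - set (fst st). \<forall>\<rho>'. mes_affordable N A (snd st) d \<longrightarrow> mes_rho_ok N A (snd st) d \<rho>' \<longrightarrow> \<rho> \<le> \<rho>') \<and>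
        fst st' = c # fst st \<and>
        snd st' = (\<lambda>i. if i \<in> supporters N A c then snd st i - min \<rho> (snd st i) else snd st i))"

definition mes_phase1_done :: "'a set \<Rightarrow> 'v set \<Rightarrow> ('v \<Rightarrow> 'a set) \<Rightarrow> ('a list \<times> ('v \<Rightarrow> real)) \<Rightarrow> bool" where
  "mes_phase1_done C N A st \<longleftrightarrow> \<not> (\<exists>c\<in>C - set (fst st). mes_affordable N A (snd st) c)"

definition equal_shares :: "('a, 'v) abc_rule" where
  "equal_shares C N A k =
     {set xs | xs. \<exists>st b. (mes_step1 C N A)\<^sup>*\<^sup>* ([], \<lambda>_. real k / real (card N)) st \<and>
                          mes_phase1_done C N A st \<and>
                          (phragmen_step C N A)\<^sup>*\<^sup>* st (xs, b) \<and> length xs = k}"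

end

theory Submission
  imports Defs
begin

text \<open>Removing an unrepresented voter i changes nothing as long as the rule has not yet elected
  a candidate she approves: i adds s(1) to the Thiele score of exactly her approved candidates,
  and she only speeds up the Phragmen purchase of her approved candidates. Hence every purchase
  avoiding A i is also a purchase without i, and a purchase without i is a purchase with i
  whenever no purchase with i at that point meets A i. So if the profile without i can lead to a
  committee meeting A i, the profile with i can too; as the committee of the profile with i that
  is disjoint from A i survives the removal of i, the removal is no strict Kelly improvement.

  For equal shares the presence of i lowers every budget from k/(n-1) to k/n. In the example
  below (k = 3, voter 9 with ballot {3}) budgets of 3/10 leave candidate 1 unaffordable after
  candidate 0 is bought, so phase 1 buys 0 and 2 and phase 2 buys 1, giving {0, 1, 2}; budgets
  of 1/3 let phase 1 buy 0 and 1, after which phase 2 buys 3, giving {0, 1, 3}.\<close>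

section \<open>Sequential rules and an unrepresented voter\<close>

text \<open>step and step' are the purchase relations of a sequential rule on a profile and on the
  same profile without a voter with ballot B; chosen s lists the candidates bought in state s.\<close>
locale voter_removal_runs =
  fixes step step' :: "'s \<Rightarrow> 's \<Rightarrow> bool" and chosen :: "'s \<Rightarrow> 'a list"
    and init :: 's and B :: "'a set" and k :: nat
  assumes chosen_init: "chosen init = []"
    and step_extends: "step s t \<Longrightarrow> \<exists>c. chosen t = c # chosen s"
    and step'_extends: "step' s t \<Longrightarrow> \<exists>c. chosen t = c # chosen s"
    and avoiding_step_is_step':
      "step\<^sup>*\<^sup>* init s \<Longrightarrow> set (chosen s) \<inter> B = {} \<Longrightarrow> step s t \<Longrightarrow> set (chosen t) \<inter> B = {} \<Longrightarrow> step' s t"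
    and step'_is_step:
      "step\<^sup>*\<^sup>* init s \<Longrightarrow> set (chosen s) \<inter> B = {} \<Longrightarrow> \<forall>u. step s u \<longrightarrow> set (chosen u) \<inter> B = {} \<Longrightarrow>
       step' s t \<Longrightarrow> step s t"
    and step_exists: "step\<^sup>*\<^sup>* init s \<Longrightarrow> length (chosen s) < k \<Longrightarrow> \<exists>t. step s t"
begin

definition outcomes :: "'a set set" where
  "outcomes = {set (chosen s) | s. step\<^sup>*\<^sup>* init s \<and> length (chosen s) = k}"

definition outcomes' :: "'a set set" where
  "outcomes' = {set (chosen s) | s. step'\<^sup>*\<^sup>* init s \<and> length (chosen s) = k}"

lemma avoiding_run_is_run':
  "step\<^sup>*\<^sup>* init s \<Longrightarrow> set (chosen s) \<inter> B = {} \<Longrightarrow> step'\<^sup>*\<^sup>* init s"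
proof (induction rule: rtranclp_induct)
  case base
  then show ?case by simp
next
  case (step s t)
  obtain c where "chosen t = c # chosen s" using step_extends[OF step(2)] by blast
  then have "set (chosen s) \<inter> B = {}" using step(4) by auto
  then show ?case
    using step avoiding_step_is_step' by (meson rtranclp.rtrancl_into_rtrancl)
qed

lemma run'_avoiding_or_hit:
  "step'\<^sup>*\<^sup>* init s \<Longrightarrow>
     (step\<^sup>*\<^sup>* init s \<and> set (chosen s) \<inter> B = {}) \<or>
     (\<exists>t. step\<^sup>*\<^sup>* init t \<and> set (chosen t) \<inter> B \<noteq> {} \<and> length (chosen t) \<le> length (chosen s))"
proof (induction rule: rtranclp_induct)
  case base
  then show ?case using chosen_init by simp
next
  case (step s t)
  obtain c where t: "chosen t = c # chosen s" using step'_extends[OF step(2)] by blast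
  from step(3) show ?case
  proof
    assume s: "step\<^sup>*\<^sup>* init s \<and> set (chosen s) \<inter> B = {}"
    show ?case
    proof (cases "\<forall>u. step s u \<longrightarrow> set (chosen u) \<inter> B = {}")
      case True
      then have "step s t" using s step(2) step'_is_step by blast
      then show ?thesis using s True by (meson rtranclp.rtrancl_into_rtrancl)
    next
      case False
      then obtain u where u: "step s u" "set (chosen u) \<inter> B \<noteq> {}" by blast
      obtain d where "chosen u = d # chosen s" using step_extends[OF u(1)] by blast
      then show ?thesis using s u t by (intro disjI2 exI[of _ u]) auto
    qed
  qed (use t in force)
qed

lemma run_extends_to_length:
  "step\<^sup>*\<^sup>* init s \<Longrightarrow> length (chosen s) \<le> k \<Longrightarrow>
     \<exists>t. step\<^sup>*\<^sup>* init t \<and> length (chosen t) = k \<and> set (chosen s) \<subseteq> set (chosen t)"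
proof (induction "k - length (chosen s)" arbitrary: s)
  case 0
  then show ?case by auto
next
  case (Suc n)
  have "length (chosen s) < k" using Suc.hyps(2) by linarith
  then obtain u where u: "step s u" using step_exists Suc.prems(1) by blast
  obtain c where c: "chosen u = c # chosen s" using step_extends[OF u] by blast
  have "\<exists>t. step\<^sup>*\<^sup>* init t \<and> length (chosen t) = k \<and> set (chosen u) \<subseteq> set (chosen t)"
    using Suc u c by (intro Suc.hyps) auto
  then show ?case using c by auto
qed

theorem not_kelly_strict_outcomes:
  assumes "finite B" and "W \<in> outcomes" and "W \<inter> B = {}"
  shows "\<not> kelly_strict B outcomes' outcomes"
proof
  assume strict: "kelly_strict B outcomes' outcomes"
  then obtain W1 W2 where "W1 \<in> outcomes'" "W2 \<in> outcomes" "card (W2 \<inter> B) < card (W1 \<inter> B)"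
    unfolding kelly_strict_def by blast
  then obtain s where s: "step'\<^sup>*\<^sup>* init s" "length (chosen s) = k" "set (chosen s) \<inter> B \<noteq> {}"
    unfolding outcomes'_def by fastforce
  obtain t where t: "step\<^sup>*\<^sup>* init t" "set (chosen t) \<inter> B \<noteq> {}" "length (chosen t) \<le> k"
    using run'_avoiding_or_hit[OF s(1)] s by auto
  obtain u where u: "step\<^sup>*\<^sup>* init u" "length (chosen u) = k" "set (chosen t) \<subseteq> set (chosen u)"
    using run_extends_to_length[OF t(1,3)] by blast
  have hit: "set (chosen u) \<in> outcomes" "0 < card (set (chosen u) \<inter> B)"
    using u t(2) \<open>finite B\<close> unfolding outcomes_def by (auto simp: card_gt_0_iff)
  have "W \<in> outcomes'"
    using assms(2,3) avoiding_run_is_run' unfolding outcomes_def outcomes'_def by blast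
  then have "card (set (chosen u) \<inter> B) \<le> card (W \<inter> B)"
    using strict hit(1) unfolding kelly_strict_def by blast
  with hit(2) \<open>W \<inter> B = {}\<close> show False by simp
qed

end

section \<open>Sequential Thiele rules\<close>

lemma ex_unchosen_candidate: "length xs < card C \<Longrightarrow> \<exists>c. c \<in> C - set xs"
  by (metis Diff_eq_empty_iff List.finite_set card_length card_mono ex_in_conv leD order.strict_trans2)

lemma thiele_score_remove_voter:
  assumes "finite N" "i \<in> N" "S \<inter> A i = {}" "s 0 = 0"
  shows "thiele_score s N A (insert y S) =
           thiele_score s (N - {i}) A (insert y S) + (if y \<in> A i then s 1 else 0)"
proof -
  have "A i \<inter> insert y S = (if y \<in> A i then {y} else {})" using assms(3) by auto
  then show ?thesis
    using assms unfolding thiele_score_def by (simp add: sum.remove add.commute)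
qed

lemma seq_thiele_step_exists:
  assumes "finite C" "x \<in> C - set xs"
  shows "\<exists>z. seq_thiele_step s C N A xs (z # xs)"
proof -
  let ?f = "\<lambda>y. thiele_score s N A (insert y (set xs))"
  have "Max (?f ` (C - set xs)) \<in> ?f ` (C - set xs)" using assms by (intro Max_in) auto
  then obtain z where "z \<in> C - set xs" "?f z = Max (?f ` (C - set xs))" by auto
  then show ?thesis
    unfolding seq_thiele_step_def using assms(1) by (metis Max_ge finite_Diff finite_imageI imageI)
qed

context
  fixes s :: "nat \<Rightarrow> rat" and C :: "'a set" and N :: "'v set" and A :: "'v \<Rightarrow> 'a set"
    and i :: 'v and xs :: "'a list"
  assumes s: "thiele_function s" and N: "finite N" "i \<in> N" and xs: "set xs \<inter> A i = {}"
begin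

private abbreviation "score \<equiv> thiele_score s N A"
private abbreviation "score' \<equiv> thiele_score s (N - {i}) A"

private lemma score_split:
  "score (insert y (set xs)) = score' (insert y (set xs)) + (if y \<in> A i then s 1 else 0)"
  using thiele_score_remove_voter[of N i "set xs" A s, OF N xs] s unfolding thiele_function_def by blast

private lemma score'_le_score: "score' (insert y (set xs)) \<le> score (insert y (set xs))"
  using score_split s unfolding thiele_function_def by simp

lemma seq_thiele_step_remove_voter:
  assumes "seq_thiele_step s C N A xs ys" "set ys \<inter> A i = {}"
  shows "seq_thiele_step s C (N - {i}) A xs ys"
proof -
  obtain x where x: "x \<in> C - set xs" "ys = x # xs"
    and max: "\<forall>y\<in>C - set xs. score (insert y (set xs)) \<le> score (insert x (set xs))"
    using assms(1) unfolding seq_thiele_step_def by blast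
  have "score' (insert y (set xs)) \<le> score' (insert x (set xs))" if "y \<in> C - set xs" for y
  proof -
    have "score' (insert y (set xs)) \<le> score (insert x (set xs))"
      using score'_le_score max that by (meson order.trans)
    also have "\<dots> = score' (insert x (set xs))" using score_split assms(2) x(2) by simp
    finally show ?thesis .
  qed
  then show ?thesis unfolding seq_thiele_step_def using x by blast
qed

lemma seq_thiele_step_add_voter:
  assumes "finite C" and avoid: "\<forall>zs. seq_thiele_step s C N A xs zs \<longrightarrow> set zs \<inter> A i = {}"
    and step': "seq_thiele_step s C (N - {i}) A xs ys"
  shows "seq_thiele_step s C N A xs ys"
proof -
  obtain x where x: "x \<in> C - set xs" "ys = x # xs"
    and max': "\<forall>y\<in>C - set xs. score' (insert y (set xs)) \<le> score' (insert x (set xs))"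
    using step' unfolding seq_thiele_step_def by blast
  obtain z where z: "seq_thiele_step s C N A xs (z # xs)"
    using seq_thiele_step_exists[OF \<open>finite C\<close> x(1)] by blast
  then have "z \<notin> A i" using avoid by auto
  from z have zC: "z \<in> C - set xs"
    and max: "\<forall>y\<in>C - set xs. score (insert y (set xs)) \<le> score (insert z (set xs))"
    unfolding seq_thiele_step_def by auto
  have "score (insert y (set xs)) \<le> score (insert x (set xs))" if "y \<in> C - set xs" for y
  proof -
    have "score (insert y (set xs)) \<le> score (insert z (set xs))" using max that by blast
    also have "\<dots> = score' (insert z (set xs))" using score_split \<open>z \<notin> A i\<close> by simp
    also have "\<dots> \<le> score' (insert x (set xs))" using max' zC by blast
    also have "\<dots> \<le> score (insert x (set xs))" by (rule score'_le_score)
    finally show ?thesis .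
  qed
  then show ?thesis unfolding seq_thiele_step_def using x by blast
qed

end

lemma seq_thiele_participation:
  assumes s: "thiele_function s" and "finite C"
  shows "participation_unrepresented C (seq_thiele s)"
  unfolding participation_unrepresented_def
proof (intro allI impI)
  fix N :: "'v set" and A k i
  assume vp: "valid_profile C N A" and "2 \<le> card N" "1 \<le> k" and k: "k < card C" and i: "i \<in> N"
    and "\<exists>W\<in>seq_thiele s C N A k. W \<inter> A i = {}"
  have N: "finite N" using vp unfolding valid_profile_def by simp
  interpret voter_removal_runs "seq_thiele_step s C N A" "seq_thiele_step s C (N - {i}) A" id "[]" "A i" k
  proof
    show "\<exists>c. id ys = c # id xs" if "seq_thiele_step s C N A xs ys" for xs ys
      using that unfolding seq_thiele_step_def by auto
    show "\<exists>c. id ys = c # id xs" if "seq_thiele_step s C (N - {i}) A xs ys" for xs ys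
      using that unfolding seq_thiele_step_def by auto
    show "seq_thiele_step s C (N - {i}) A xs ys"
      if "set (id xs) \<inter> A i = {}" "seq_thiele_step s C N A xs ys" "set (id ys) \<inter> A i = {}" for xs ys
      using seq_thiele_step_remove_voter[OF s N i] that by simp
    show "seq_thiele_step s C N A xs ys"
      if "set (id xs) \<inter> A i = {}" "\<forall>zs. seq_thiele_step s C N A xs zs \<longrightarrow> set (id zs) \<inter> A i = {}"
        "seq_thiele_step s C (N - {i}) A xs ys" for xs ys
      using seq_thiele_step_add_voter[OF s N i _ \<open>finite C\<close>] that by simp
    show "\<exists>ys. seq_thiele_step s C N A xs ys" if len: "length (id xs) < k" for xs
    proof -
      obtain x where "x \<in> C - set xs" using ex_unchosen_candidate[of xs C] len k by auto
      then show ?thesis using seq_thiele_step_exists[OF \<open>finite C\<close>] by blast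
    qed
  qed simp
  have "outcomes = seq_thiele s C N A k" "outcomes' = seq_thiele s C (N - {i}) A k"
    unfolding outcomes_def outcomes'_def seq_thiele_def by simp_all
  moreover have "finite (A i)" using vp i \<open>finite C\<close> unfolding valid_profile_def by (meson finite_subset)
  ultimately show "\<not> kelly_strict (A i) (seq_thiele s C (N - {i}) A k) (seq_thiele s C N A k)"
    using not_kelly_strict_outcomes \<open>\<exists>W\<in>seq_thiele s C N A k. W \<inter> A i = {}\<close> by metis
qed

section \<open>Sequential Phragmen\<close>

lemma supporters_remove_voter_subset: "supporters (N - {i}) A d \<subseteq> supporters N A d"
  unfolding supporters_def by auto

lemma supporters_remove_nonapprover: "d \<notin> A i \<Longrightarrow> supporters (N - {i}) A d = supporters N A d"
  unfolding supporters_def by auto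

lemma phrag_time_remove_nonapprover: "d \<notin> A i \<Longrightarrow> phrag_time (N - {i}) A b d = phrag_time N A b d"
  unfolding phrag_time_def by (simp add: supporters_remove_nonapprover)

lemma phrag_time_le_remove_voter:
  assumes "finite N" "i \<in> N" "\<forall>j. 0 \<le> b j" "(\<Sum>j\<in>supporters N A d. b j) \<le> 1"
    and ne: "supporters (N - {i}) A d \<noteq> {}"
  shows "phrag_time N A b d \<le> phrag_time (N - {i}) A b d"
proof (cases "d \<in> A i")
  case True
  let ?S = "supporters (N - {i}) A d"
  define n where "n = real (card ?S)"
  define \<sigma> where "\<sigma> = (\<Sum>j\<in>?S. b j)"
  have "finite ?S" using \<open>finite N\<close> unfolding supporters_def by simp
  then have n: "0 < n" using ne unfolding n_def by (simp add: card_gt_0_iff)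
  have S: "supporters N A d = insert i ?S" "i \<notin> ?S"
    using True \<open>i \<in> N\<close> unfolding supporters_def by auto
  then have card: "real (card (supporters N A d)) = n + 1" and sum: "(\<Sum>j\<in>supporters N A d. b j) = b i + \<sigma>"
    using \<open>finite ?S\<close> unfolding n_def \<sigma>_def by simp_all
  have "0 \<le> b i * n" "0 \<le> b i" using assms(3) n by simp_all
  then have "(1 - (b i + \<sigma>)) * n \<le> (1 - \<sigma>) * (n + 1)"
    using assms(4) sum by (simp add: algebra_simps)
  then have "(1 - (b i + \<sigma>)) / (n + 1) \<le> (1 - \<sigma>) / n"
    using n by (simp add: divide_simps)
  then show ?thesis unfolding phrag_time_def card sum n_def \<sigma>_def .
qed (simp add: phrag_time_remove_nonapprover)

definition phragmen_invariant :: "'a set \<Rightarrow> 'v set \<Rightarrow> ('v \<Rightarrow> 'a set) \<Rightarrow> ('a list \<times> ('v \<Rightarrow> real)) \<Rightarrow> bool" where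
  "phragmen_invariant C N A st \<longleftrightarrow>
     (\<forall>j. 0 \<le> snd st j) \<and> (\<forall>d\<in>C - set (fst st). (\<Sum>j\<in>supporters N A d. snd st j) \<le> 1)"

lemma phragmen_stepI:
  assumes "c \<in> C - set xs" "supporters N A c \<noteq> {}"
    "\<And>d. d \<in> C - set xs \<Longrightarrow> supporters N A d \<noteq> {} \<Longrightarrow> phrag_time N A b c \<le> phrag_time N A b d"
  shows "phragmen_step C N A (xs, b)
           (c # xs, \<lambda>j. if j \<in> supporters N A c then 0 else b j + phrag_time N A b c)"
  unfolding phragmen_step_def using assms by auto

lemma phragmen_stepE:
  assumes "phragmen_step C N A (xs, b) st"
  obtains c where "c \<in> C - set xs" "supporters N A c \<noteq> {}"
      "\<forall>d\<in>C - set xs. supporters N A d \<noteq> {} \<longrightarrow> phrag_time N A b c \<le> phrag_time N A b d"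
      "st = (c # xs, \<lambda>j. if j \<in> supporters N A c then 0 else b j + phrag_time N A b c)"
  | c where "c \<in> C - set xs" "\<forall>d\<in>C - set xs. supporters N A d = {}" "st = (c # xs, b)"
proof -
  obtain c where c: "c \<in> C - set xs" "fst st = c # xs" and
    "(supporters N A c \<noteq> {} \<and>
      (\<forall>d\<in>C - set xs. supporters N A d \<noteq> {} \<longrightarrow> phrag_time N A b c \<le> phrag_time N A b d) \<and>
      snd st = (\<lambda>j. if j \<in> supporters N A c then 0 else b j + phrag_time N A b c)) \<or>
     ((\<forall>d\<in>C - set xs. supporters N A d = {}) \<and> snd st = b)"
    using assms unfolding phragmen_step_def fst_conv snd_conv by blast
  then show thesis
  proof (elim disjE conjE)
    assume "supporters N A c \<noteq> {}"
      "\<forall>d\<in>C - set xs. supporters N A d \<noteq> {} \<longrightarrow> phrag_time N A b c \<le> phrag_time N A b d"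
      "snd st = (\<lambda>j. if j \<in> supporters N A c then 0 else b j + phrag_time N A b c)"
    then show thesis using that(1)[OF c(1)] c(2) by (simp add: prod_eq_iff)
  next
    assume "\<forall>d\<in>C - set xs. supporters N A d = {}" "snd st = b"
    then show thesis using that(2)[OF c(1)] c(2) by (simp add: prod_eq_iff)
  qed
qed

lemma phragmen_invariant_step:
  assumes "finite N" "phragmen_invariant C N A (xs, b)" "phragmen_step C N A (xs, b) st"
  shows "phragmen_invariant C N A st"
  using assms(3)
proof (cases rule: phragmen_stepE)
  case (1 c)
  let ?t = "phrag_time N A b c"
  have fin: "finite (supporters N A d)" for d using \<open>finite N\<close> unfolding supporters_def by simp
  have b: "\<forall>j. 0 \<le> b j" using assms(2) unfolding phragmen_invariant_def by simp
  have "0 \<le> ?t"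
    using assms(2) 1(1,2) fin[of c] unfolding phragmen_invariant_def phrag_time_def by auto
  have "(\<Sum>j\<in>supporters N A d. snd st j) \<le> 1" if d: "d \<in> C - set (c # xs)" for d
  proof (cases "supporters N A d = {}")
    case False
    have "(\<Sum>j\<in>supporters N A d. snd st j) \<le> (\<Sum>j\<in>supporters N A d. b j + ?t)"
      using 1(4) b \<open>0 \<le> ?t\<close> by (intro sum_mono) auto
    also have "\<dots> = (\<Sum>j\<in>supporters N A d. b j) + real (card (supporters N A d)) * ?t"
      by (simp add: sum.distrib)
    also have "\<dots> \<le> (\<Sum>j\<in>supporters N A d. b j) + real (card (supporters N A d)) * phrag_time N A b d"
      using 1(3) d False by (intro add_left_mono mult_left_mono) auto
    also have "\<dots> = 1"
      using False fin[of d] unfolding phrag_time_def by (simp add: card_gt_0_iff)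
    finally show ?thesis .
  qed simp
  then show ?thesis using 1(4) b \<open>0 \<le> ?t\<close> unfolding phragmen_invariant_def by auto
qed (use assms(2) in \<open>auto simp: phragmen_invariant_def\<close>)

lemma phragmen_invariant_reachable:
  assumes "finite N"
  shows "(phragmen_step C N A)\<^sup>*\<^sup>* ([], \<lambda>_. 0) st \<Longrightarrow> phragmen_invariant C N A st"
proof (induction rule: rtranclp_induct)
  case base
  then show ?case unfolding phragmen_invariant_def by simp
next
  case (step st st')
  then show ?case using phragmen_invariant_step[OF assms, of C A "fst st" "snd st"] by simp
qed

lemma phragmen_step_exists:
  assumes "finite C" "c \<in> C - set xs"
  shows "\<exists>st. phragmen_step C N A (xs, b) st"
proof (cases "\<exists>d\<in>C - set xs. supporters N A d \<noteq> {}")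
  case True
  let ?D = "{d\<in>C - set xs. supporters N A d \<noteq> {}}"
  obtain z where "is_arg_min (phrag_time N A b) (\<lambda>d. d \<in> ?D) z"
    using ex_is_arg_min_if_finite[of ?D] True \<open>finite C\<close> by fastforce
  then show ?thesis unfolding is_arg_min_linorder by (blast intro: phragmen_stepI)
next
  case False
  then show ?thesis using assms(2) unfolding phragmen_step_def by auto
qed

context
  fixes C :: "'a set" and N :: "'v set" and A :: "'v \<Rightarrow> 'a set" and i :: 'v
    and xs :: "'a list" and b :: "'v \<Rightarrow> real"
  assumes N: "finite N" "i \<in> N" and inv: "phragmen_invariant C N A (xs, b)"
begin

private lemma phrag_time_le_remove:
  "d \<in> C - set xs \<Longrightarrow> supporters (N - {i}) A d \<noteq> {} \<Longrightarrow> phrag_time N A b d \<le> phrag_time (N - {i}) A b d"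
  using phrag_time_le_remove_voter[OF N, of b A d] inv unfolding phragmen_invariant_def by simp

lemma phragmen_step_remove_voter:
  assumes "phragmen_step C N A (xs, b) st" "set (fst st) \<inter> A i = {}"
  shows "phragmen_step C (N - {i}) A (xs, b) st"
  using assms(1)
proof (cases rule: phragmen_stepE)
  case (1 c)
  have c: "c \<notin> A i" using assms(2) 1(4) by simp
  have "phrag_time (N - {i}) A b c \<le> phrag_time (N - {i}) A b d"
    if "d \<in> C - set xs" "supporters (N - {i}) A d \<noteq> {}" for d
  proof -
    have "supporters N A d \<noteq> {}" using that(2) supporters_remove_voter_subset[of N i A d] by blast
    then have "phrag_time N A b c \<le> phrag_time N A b d" using 1(3) that(1) by blast
    also have "\<dots> \<le> phrag_time (N - {i}) A b d" using phrag_time_le_remove that by blast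
    finally show ?thesis using phrag_time_remove_nonapprover[of c A i N b, OF c] by simp
  qed
  moreover have eq: "supporters (N - {i}) A c = supporters N A c"
    "phrag_time (N - {i}) A b c = phrag_time N A b c"
    using c supporters_remove_nonapprover[of c A i N] phrag_time_remove_nonapprover[of c A i N b] by simp_all
  ultimately have "phragmen_step C (N - {i}) A (xs, b)
      (c # xs, \<lambda>j. if j \<in> supporters (N - {i}) A c then 0 else b j + phrag_time (N - {i}) A b c)"
    using 1(1,2) by (intro phragmen_stepI) auto
  then show ?thesis using 1(4) by (simp add: eq cong: if_cong)
next
  case (2 c)
  then show ?thesis
    unfolding phragmen_step_def using supporters_remove_voter_subset by fastforce
qed

text \<open>The reduced rule's purchase is a purchase of the full rule as soon as the full rule cannot
  elect a candidate of A i at this point: the chain of purchase times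
  t'(c) \<le> t'(z) = t(z) \<le> t(c) \<le> t'(c) through a full purchase z shows that c is also a
  full purchase, hence c \<notin> A i, and then both rules update the budgets identically.\<close>
lemma phragmen_step_add_voter:
  assumes "finite C" and avoid: "\<forall>st. phragmen_step C N A (xs, b) st \<longrightarrow> set (fst st) \<inter> A i = {}"
    and step': "phragmen_step C (N - {i}) A (xs, b) st"
  shows "phragmen_step C N A (xs, b) st"
proof -
  obtain c where "c \<in> C - set xs" using step' unfolding phragmen_step_def by auto
  then obtain u where u: "phragmen_step C N A (xs, b) u"
    using phragmen_step_exists[OF \<open>finite C\<close>] by blast
  then show ?thesis
  proof (cases rule: phragmen_stepE)
    case (1 z)
    note zC = 1(1) and z_min = 1(3)
    have "z \<notin> A i" using avoid[rule_format, OF u] 1(4) by simp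
    then have z: "supporters (N - {i}) A z \<noteq> {}" "phrag_time (N - {i}) A b z = phrag_time N A b z"
      using 1(2) supporters_remove_nonapprover[of z A i N] phrag_time_remove_nonapprover[of z A i N b]
      by simp_all
    from step' show ?thesis
    proof (cases rule: phragmen_stepE)
      case (1 c)
      have "phrag_time N A b c \<le> phrag_time N A b d"
        if "d \<in> C - set xs" "supporters N A d \<noteq> {}" for d
      proof -
        have "phrag_time N A b c \<le> phrag_time (N - {i}) A b c" using phrag_time_le_remove 1(1,2) by blast
        also have "\<dots> \<le> phrag_time (N - {i}) A b z" using 1(3) zC z(1) by blast
        also have "\<dots> = phrag_time N A b z" by (rule z(2))
        also have "\<dots> \<le> phrag_time N A b d" using z_min that by blast
        finally show ?thesis .
      qed
      moreover have "supporters N A c \<noteq> {}" using 1(2) supporters_remove_voter_subset[of N i A c] by blast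
      ultimately have full: "phragmen_step C N A (xs, b)
          (c # xs, \<lambda>j. if j \<in> supporters N A c then 0 else b j + phrag_time N A b c)"
        using 1(1) by (intro phragmen_stepI)
      then have "c \<notin> A i" using avoid by auto
      then show ?thesis
        using full 1(4) supporters_remove_nonapprover[of c A i N] phrag_time_remove_nonapprover[of c A i N b]
        by (simp cong: if_cong)
    next
      case (2 c)
      then show ?thesis using z(1) zC by blast
    qed
  next
    case (2 z)
    note unsupported = 2(2)
    from step' show ?thesis
    proof (cases rule: phragmen_stepE)
      case (1 c)
      then show ?thesis using unsupported supporters_remove_voter_subset[of N i A c] by blast
    next
      case (2 c)
      then show ?thesis using unsupported unfolding phragmen_step_def by auto
    qed
  qed
qed

end

lemma seq_phragmen_participation:
  assumes "finite C"
  shows "participation_unrepresented C seq_phragmen"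
  unfolding participation_unrepresented_def
proof (intro allI impI)
  fix N :: "'v set" and A k i
  assume vp: "valid_profile C N A" and "2 \<le> card N" "1 \<le> k" and k: "k < card C" and i: "i \<in> N"
    and "\<exists>W\<in>seq_phragmen C N A k. W \<inter> A i = {}"
  have N: "finite N" using vp unfolding valid_profile_def by simp
  let ?init = "([], \<lambda>_. 0) :: 'a list \<times> ('v \<Rightarrow> real)"
  have inv: "phragmen_invariant C N A (fst st, snd st)" if "(phragmen_step C N A)\<^sup>*\<^sup>* ?init st" for st
    using phragmen_invariant_reachable[OF N that] by simp
  interpret voter_removal_runs "phragmen_step C N A" "phragmen_step C (N - {i}) A" fst ?init "A i" k
  proof
    show "\<exists>c. fst t = c # fst s" if "phragmen_step C N A s t" for s t
      using that unfolding phragmen_step_def by auto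
    show "\<exists>c. fst t = c # fst s" if "phragmen_step C (N - {i}) A s t" for s t
      using that unfolding phragmen_step_def by auto
    show "phragmen_step C (N - {i}) A s t"
      if "(phragmen_step C N A)\<^sup>*\<^sup>* ?init s" "phragmen_step C N A s t" "set (fst t) \<inter> A i = {}" for s t
      using phragmen_step_remove_voter[OF N i inv[OF that(1)]] that(2,3) by simp
    show "phragmen_step C N A s t"
      if "(phragmen_step C N A)\<^sup>*\<^sup>* ?init s" "\<forall>u. phragmen_step C N A s u \<longrightarrow> set (fst u) \<inter> A i = {}"
        "phragmen_step C (N - {i}) A s t" for s t
      using phragmen_step_add_voter[OF N i inv[OF that(1)] \<open>finite C\<close>] that(2,3) by simp
    show "\<exists>t. phragmen_step C N A s t" if len: "length (fst s) < k" for s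
    proof -
      obtain c where "c \<in> C - set (fst s)" using ex_unchosen_candidate[of "fst s" C] len k by auto
      then show ?thesis using phragmen_step_exists[OF \<open>finite C\<close>, of c "fst s" N A "snd s"] by simp
    qed
  qed simp
  have "outcomes = seq_phragmen C N A k" "outcomes' = seq_phragmen C (N - {i}) A k"
    unfolding outcomes_def outcomes'_def seq_phragmen_def by force+
  moreover have "finite (A i)" using vp i \<open>finite C\<close> unfolding valid_profile_def by (meson finite_subset)
  ultimately show "\<not> kelly_strict (A i) (seq_phragmen C (N - {i}) A k) (seq_phragmen C N A k)"
    using not_kelly_strict_outcomes \<open>\<exists>W\<in>seq_phragmen C N A k. W \<inter> A i = {}\<close> by metis
qed

section \<open>The method of equal shares\<close>

lemma mes_step1I:
  assumes "c \<in> C - set xs" "mes_affordable N A b c" "mes_rho_ok N A b c \<rho>"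
    "\<And>d \<rho>'. d \<in> C - set xs \<Longrightarrow> mes_affordable N A b d \<Longrightarrow> mes_rho_ok N A b d \<rho>' \<Longrightarrow> \<rho> \<le> \<rho>'"
    "b' = (\<lambda>j. if j \<in> supporters N A c then b j - min \<rho> (b j) else b j)"
  shows "mes_step1 C N A (xs, b) (c # xs, b')"
  unfolding mes_step1_def fst_conv snd_conv using assms by (intro exI[of _ c] exI[of _ \<rho>]) auto

lemma mes_step1E:
  assumes "mes_step1 C N A (xs, b) st"
  obtains c \<rho> where "c \<in> C - set xs" "mes_affordable N A b c" "mes_rho_ok N A b c \<rho>"
    "\<forall>d\<in>C - set xs. \<forall>\<rho>'. mes_affordable N A b d \<longrightarrow> mes_rho_ok N A b d \<rho>' \<longrightarrow> \<rho> \<le> \<rho>'"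
    "st = (c # xs, \<lambda>j. if j \<in> supporters N A c then b j - min \<rho> (b j) else b j)"
proof -
  obtain c \<rho> where "c \<in> C - set xs" "mes_affordable N A b c" "mes_rho_ok N A b c \<rho>"
    "\<forall>d\<in>C - set xs. \<forall>\<rho>'. mes_affordable N A b d \<longrightarrow> mes_rho_ok N A b d \<rho>' \<longrightarrow> \<rho> \<le> \<rho>'"
    "fst st = c # xs" "snd st = (\<lambda>j. if j \<in> supporters N A c then b j - min \<rho> (b j) else b j)"
    using assms unfolding mes_step1_def fst_conv snd_conv by blast
  then show thesis by (intro that[of c \<rho>]) (simp_all add: prod_eq_iff)
qed

lemma mes_step1_not_done: "mes_step1 C N A st st' \<Longrightarrow> \<not> mes_phase1_done C N A st"
  unfolding mes_step1_def mes_phase1_done_def by blast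

lemma mes_rho_lower_bound:
  assumes "mes_rho_ok N A b c \<rho>" "card (supporters N A c) \<le> m" "0 < m"
  shows "1 / real m \<le> \<rho>"
proof -
  have "1 = (\<Sum>j\<in>supporters N A c. min \<rho> (b j))" using assms(1) unfolding mes_rho_ok_def by simp
  also have "\<dots> \<le> real (card (supporters N A c)) * \<rho>" using sum_mono[of _ "\<lambda>j. min \<rho> (b j)" "\<lambda>_. \<rho>"] by simp
  finally have "1 \<le> real (card (supporters N A c)) * \<rho>" .
  then have "0 < \<rho>" by (smt (verit) mult_nonneg_nonpos of_nat_0_le_iff)
  then have "1 \<le> real m * \<rho>"
    using \<open>1 \<le> _\<close> assms(2) by (smt (verit) mult_right_mono of_nat_le_iff)
  then show ?thesis using assms(3) by (simp add: divide_simps mult.commute)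
qed

lemma phragmen_run_length:
  "(phragmen_step C N A)\<^sup>*\<^sup>* st st' \<Longrightarrow> st' = st \<or> length (fst st) < length (fst st')"
proof (induction rule: rtranclp_induct)
  case (step st' st'')
  then have "length (fst st'') = Suc (length (fst st'))" unfolding phragmen_step_def by auto
  with step.IH show ?case by auto
qed simp

lemma equal_sharesI:
  assumes "(mes_step1 C N A)\<^sup>*\<^sup>* ([], \<lambda>_. real k / real (card N)) st" "mes_phase1_done C N A st"
    "(phragmen_step C N A)\<^sup>*\<^sup>* st (xs, b)" "length xs = k"
  shows "set xs \<in> equal_shares C N A k"
  unfolding equal_shares_def using assms by blast

definition example_candidates :: "nat set" where "example_candidates = {0, 1, 2, 3}"

definition example_voters :: "nat set" where "example_voters = {0, 1, 2, 3, 4, 5, 6, 7, 8, 9}"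

definition example_ballots :: "nat \<Rightarrow> nat set" where
  "example_ballots v =
     (if v = 0 then {0, 3} else if v \<le> 3 then {0, 1} else if v \<le> 6 then {0, 1, 2}
      else if v \<le> 8 then {2, 3} else {3})"

abbreviation "C\<^sub>x \<equiv> example_candidates"
abbreviation "N\<^sub>x \<equiv> example_voters"
abbreviation "A\<^sub>x \<equiv> example_ballots"

text \<open>Stated for Suc 0 rather than 1, the simp normal form of 1 :: nat.\<close>
lemma example_supporters [simp]:
  "supporters N\<^sub>x A\<^sub>x 0 = {0, 1, 2, 3, 4, 5, 6}"
  "supporters N\<^sub>x A\<^sub>x (Suc 0) = {1, 2, 3, 4, 5, 6}"
  "supporters N\<^sub>x A\<^sub>x 2 = {4, 5, 6, 7, 8}"
  "supporters N\<^sub>x A\<^sub>x 3 = {0, 7, 8, 9}"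
  "supporters (N\<^sub>x - {9}) A\<^sub>x 0 = {0, 1, 2, 3, 4, 5, 6}"
  "supporters (N\<^sub>x - {9}) A\<^sub>x (Suc 0) = {1, 2, 3, 4, 5, 6}"
  "supporters (N\<^sub>x - {9}) A\<^sub>x 2 = {4, 5, 6, 7, 8}"
  "supporters (N\<^sub>x - {9}) A\<^sub>x 3 = {0, 7, 8}"
  unfolding supporters_def example_voters_def example_ballots_def by auto

text \<open>Budgets during phase 1 of equal shares on the full example profile, after 0, 1 and 2
  purchases (0 bought at price 1/7 per supporter, then 2 at 37/140).\<close>
definition full_budget_0 :: "nat \<Rightarrow> real" where "full_budget_0 = (\<lambda>_. 3/10)"
definition full_budget_1 :: "nat \<Rightarrow> real" where
  "full_budget_1 = (\<lambda>v. if v \<le> 6 then 11/70 else 3/10)"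
definition full_budget_2 :: "nat \<Rightarrow> real" where
  "full_budget_2 = (\<lambda>v. if v \<le> 3 then 11/70 else if v \<le> 6 then 0 else if v \<le> 8 then 1/28 else 3/10)"

lemma full_mes_first_purchase:
  "mes_step1 C\<^sub>x N\<^sub>x A\<^sub>x ([], full_budget_0) st \<longleftrightarrow> st = ([0], full_budget_1)"
proof
  have ok: "mes_rho_ok N\<^sub>x A\<^sub>x full_budget_0 0 (1/7)"
    unfolding mes_rho_ok_def full_budget_0_def by simp
  show "mes_step1 C\<^sub>x N\<^sub>x A\<^sub>x ([], full_budget_0) st" if "st = ([0], full_budget_1)"
    unfolding that
  proof (rule mes_step1I[OF _ _ ok])
    show "mes_affordable N\<^sub>x A\<^sub>x full_budget_0 0"
      unfolding mes_affordable_def full_budget_0_def by simp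
    show "1/7 \<le> \<rho>'" if "d \<in> C\<^sub>x - set []" "mes_rho_ok N\<^sub>x A\<^sub>x full_budget_0 d \<rho>'" for d \<rho>'
    proof -
      have "card (supporters N\<^sub>x A\<^sub>x d) \<le> 7" using that(1) unfolding example_candidates_def by auto
      then show ?thesis using mes_rho_lower_bound[OF that(2), of 7] by simp
    qed
  qed (auto simp: example_candidates_def full_budget_0_def full_budget_1_def fun_eq_iff)
  assume "mes_step1 C\<^sub>x N\<^sub>x A\<^sub>x ([], full_budget_0) st"
  then obtain c \<rho> where c: "c \<in> C\<^sub>x" and \<rho>: "mes_rho_ok N\<^sub>x A\<^sub>x full_budget_0 c \<rho>"
    and min: "\<forall>d\<in>C\<^sub>x. \<forall>\<rho>'. mes_affordable N\<^sub>x A\<^sub>x full_budget_0 d \<longrightarrow> mes_rho_ok N\<^sub>x A\<^sub>x full_budget_0 d \<rho>' \<longrightarrow> \<rho> \<le> \<rho>'"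
    and st: "st = ([c], \<lambda>j. if j \<in> supporters N\<^sub>x A\<^sub>x c then full_budget_0 j - min \<rho> (full_budget_0 j) else full_budget_0 j)"
    by (rule mes_step1E) auto
  have "mes_affordable N\<^sub>x A\<^sub>x full_budget_0 0"
    unfolding mes_affordable_def full_budget_0_def by simp
  then have "\<rho> \<le> 1/7"
    using min ok unfolding example_candidates_def by blast
  have "c = 0"
  proof (rule ccontr)
    assume "c \<noteq> 0"
    then have "card (supporters N\<^sub>x A\<^sub>x c) \<le> 6" using c unfolding example_candidates_def by auto
    then have "1 / real 6 \<le> \<rho>" using mes_rho_lower_bound[OF \<rho>, of 6] by simp
    with \<open>\<rho> \<le> 1/7\<close> show False by simp
  qed
  moreover have "1/7 \<le> \<rho>" using mes_rho_lower_bound[OF \<rho>, of 7] \<open>c = 0\<close> by simp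
  ultimately show "st = ([0], full_budget_1)"
    using st \<open>\<rho> \<le> 1/7\<close> by (auto simp: full_budget_0_def full_budget_1_def fun_eq_iff)
qed

lemma full_mes_second_purchase:
  "mes_step1 C\<^sub>x N\<^sub>x A\<^sub>x ([0], full_budget_1) st \<longleftrightarrow> st = ([2, 0], full_budget_2)"
proof
  have ok: "mes_rho_ok N\<^sub>x A\<^sub>x full_budget_1 2 (37/140)"
    unfolding mes_rho_ok_def full_budget_1_def by simp
  have aff2: "mes_affordable N\<^sub>x A\<^sub>x full_budget_1 2"
    unfolding mes_affordable_def full_budget_1_def by simp
  have not_aff1: "\<not> mes_affordable N\<^sub>x A\<^sub>x full_budget_1 1"
    unfolding mes_affordable_def full_budget_1_def by simp
  have rho2: "37/140 \<le> \<rho>" if "mes_rho_ok N\<^sub>x A\<^sub>x full_budget_1 2 \<rho>" for \<rho>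
  proof -
    have "3 * min \<rho> (11/70) + 2 * min \<rho> (3/10) = 1"
      using that unfolding mes_rho_ok_def full_budget_1_def by simp
    then show ?thesis by (simp add: min_def split: if_splits)
  qed
  have rho3: "59/210 \<le> \<rho>" if "mes_rho_ok N\<^sub>x A\<^sub>x full_budget_1 3 \<rho>" for \<rho>
  proof -
    have "min \<rho> (11/70) + 3 * min \<rho> (3/10) = 1"
      using that unfolding mes_rho_ok_def full_budget_1_def by simp
    then show ?thesis by (simp add: min_def split: if_splits)
  qed
  have rho_min: "37/140 \<le> \<rho>"
    if "d \<in> C\<^sub>x - {0}" "mes_affordable N\<^sub>x A\<^sub>x full_budget_1 d" "mes_rho_ok N\<^sub>x A\<^sub>x full_budget_1 d \<rho>" for d \<rho>
  proof -
    have "d = 2 \<or> d = 3" using that(1,2) not_aff1 unfolding example_candidates_def by auto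
    then show ?thesis using rho2 rho3 that(3) by force
  qed
  show "mes_step1 C\<^sub>x N\<^sub>x A\<^sub>x ([0], full_budget_1) st" if "st = ([2, 0], full_budget_2)"
    unfolding that
    by (rule mes_step1I[OF _ aff2 ok])
      (use rho_min in \<open>auto simp: example_candidates_def full_budget_1_def full_budget_2_def fun_eq_iff\<close>)
  assume "mes_step1 C\<^sub>x N\<^sub>x A\<^sub>x ([0], full_budget_1) st"
  then obtain c \<rho> where c: "c \<in> C\<^sub>x - {0}" and aff: "mes_affordable N\<^sub>x A\<^sub>x full_budget_1 c"
    and \<rho>: "mes_rho_ok N\<^sub>x A\<^sub>x full_budget_1 c \<rho>"
    and min: "\<forall>d\<in>C\<^sub>x - {0}. \<forall>\<rho>'. mes_affordable N\<^sub>x A\<^sub>x full_budget_1 d \<longrightarrow> mes_rho_ok N\<^sub>x A\<^sub>x full_budget_1 d \<rho>' \<longrightarrow> \<rho> \<le> \<rho>'"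
    and st: "st = ([c, 0], \<lambda>j. if j \<in> supporters N\<^sub>x A\<^sub>x c then full_budget_1 j - min \<rho> (full_budget_1 j) else full_budget_1 j)"
    by (rule mes_step1E) auto
  have "2 \<in> C\<^sub>x - {0}" unfolding example_candidates_def by simp
  then have "\<rho> \<le> 37/140" using min aff2 ok by blast
  have "c = 2"
  proof (rule ccontr)
    assume "c \<noteq> 2"
    then have "c = 3" using c aff not_aff1 unfolding example_candidates_def by auto
    with rho3 \<rho> \<open>\<rho> \<le> 37/140\<close> show False by fastforce
  qed
  with rho2 \<rho> \<open>\<rho> \<le> 37/140\<close> have "\<rho> = 37/140" by fastforce
  then show "st = ([2, 0], full_budget_2)"
    using st \<open>c = 2\<close> by (auto simp: full_budget_1_def full_budget_2_def fun_eq_iff)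
qed

lemma full_mes_phase1_done: "mes_phase1_done C\<^sub>x N\<^sub>x A\<^sub>x ([2, 0], full_budget_2)"
  unfolding mes_phase1_done_def mes_affordable_def example_candidates_def
  by (auto simp: full_budget_2_def)

lemma full_mes_phase1:
  assumes "(mes_step1 C\<^sub>x N\<^sub>x A\<^sub>x)\<^sup>*\<^sup>* ([], full_budget_0) st" and stop: "mes_phase1_done C\<^sub>x N\<^sub>x A\<^sub>x st"
  shows "st = ([2, 0], full_budget_2)"
proof -
  have step1: "mes_step1 C\<^sub>x N\<^sub>x A\<^sub>x ([], full_budget_0) ([0], full_budget_1)"
    and step2: "mes_step1 C\<^sub>x N\<^sub>x A\<^sub>x ([0], full_budget_1) ([2, 0], full_budget_2)"
    by (simp_all add: full_mes_first_purchase full_mes_second_purchase)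
  from assms(1) show ?thesis
  proof (cases rule: converse_rtranclpE)
    case base
    with stop step1 mes_step1_not_done show ?thesis by blast
  next
    case (step st1)
    then have "(mes_step1 C\<^sub>x N\<^sub>x A\<^sub>x)\<^sup>*\<^sup>* ([0], full_budget_1) st"
      by (simp add: full_mes_first_purchase)
    then show ?thesis
    proof (cases rule: converse_rtranclpE)
      case base
      with stop step2 mes_step1_not_done show ?thesis by blast
    next
      case (step st2)
      then have "(mes_step1 C\<^sub>x N\<^sub>x A\<^sub>x)\<^sup>*\<^sup>* ([2, 0], full_budget_2) st"
        by (simp add: full_mes_second_purchase)
      then show ?thesis
        using full_mes_phase1_done mes_step1_not_done by (cases rule: converse_rtranclpE) blast+
    qed
  qed
qed

lemma full_phrag_times:
  "phrag_time N\<^sub>x A\<^sub>x full_budget_2 1 = 37/420" "phrag_time N\<^sub>x A\<^sub>x full_budget_2 3 = 33/280"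
  unfolding phrag_time_def full_budget_2_def by simp_all

lemma full_phragmen_step:
  assumes "phragmen_step C\<^sub>x N\<^sub>x A\<^sub>x ([2, 0], full_budget_2) st"
  shows "fst st = [1, 2, 0]"
  using assms
proof (cases rule: phragmen_stepE)
  case (1 c)
  have "c = 1 \<or> c = 3" using 1(1) unfolding example_candidates_def by auto
  moreover have "c \<noteq> 3"
  proof
    assume "c = 3"
    then have "phrag_time N\<^sub>x A\<^sub>x full_budget_2 3 \<le> phrag_time N\<^sub>x A\<^sub>x full_budget_2 1"
      using 1(3) unfolding example_candidates_def by simp
    then show False using full_phrag_times by simp
  qed
  ultimately show ?thesis using 1(4) by simp
next
  case (2 c)
  then show ?thesis using 2(2)[rule_format, of 1] unfolding example_candidates_def by simp
qed

lemma full_equal_shares: "equal_shares C\<^sub>x N\<^sub>x A\<^sub>x 3 = {{0, 1, 2}}"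
proof -
  have init: "(\<lambda>_. real 3 / real (card N\<^sub>x)) = full_budget_0"
    unfolding full_budget_0_def example_voters_def by simp
  have phase1: "(mes_step1 C\<^sub>x N\<^sub>x A\<^sub>x)\<^sup>*\<^sup>* ([], full_budget_0) ([2, 0], full_budget_2)"
    using full_mes_first_purchase[of "([0], full_budget_1)"] full_mes_second_purchase[of "([2, 0], full_budget_2)"]
    by (simp add: converse_rtranclp_into_rtranclp)
  have "W = {0, 1, 2}" if outcome: "W \<in> equal_shares C\<^sub>x N\<^sub>x A\<^sub>x 3" for W
  proof -
    obtain xs st b where W: "W = set xs" and "(mes_step1 C\<^sub>x N\<^sub>x A\<^sub>x)\<^sup>*\<^sup>* ([], full_budget_0) st"
      "mes_phase1_done C\<^sub>x N\<^sub>x A\<^sub>x st" and phase2: "(phragmen_step C\<^sub>x N\<^sub>x A\<^sub>x)\<^sup>*\<^sup>* st (xs, b)"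
      and len: "length xs = 3"
      using outcome unfolding equal_shares_def init by blast
    then have "st = ([2, 0], full_budget_2)" by (intro full_mes_phase1)
    with phase2 len have "xs = [1, 2, 0]"
      using full_phragmen_step phragmen_run_length
      by (cases rule: converse_rtranclpE) fastforce+
    then show ?thesis using W by auto
  qed
  moreover have "{0, 1, 2} \<in> equal_shares C\<^sub>x N\<^sub>x A\<^sub>x 3"
  proof -
    have "phragmen_step C\<^sub>x N\<^sub>x A\<^sub>x ([2, 0], full_budget_2)
        ([1, 2, 0], \<lambda>j. if j \<in> supporters N\<^sub>x A\<^sub>x 1 then 0 else full_budget_2 j + phrag_time N\<^sub>x A\<^sub>x full_budget_2 1)"
      using full_phrag_times by (intro phragmen_stepI) (auto simp: example_candidates_def)
    then have "set [1, 2, 0] \<in> equal_shares C\<^sub>x N\<^sub>x A\<^sub>x 3"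
      using phase1 full_mes_phase1_done unfolding init[symmetric] by (intro equal_sharesI) auto
    then show ?thesis by (simp add: insert_commute)
  qed
  ultimately show ?thesis by blast
qed

text \<open>The same without voter 9: 0 bought at price 1/7, then 1 at 1/6.\<close>
definition reduced_budget_0 :: "nat \<Rightarrow> real" where "reduced_budget_0 = (\<lambda>_. 1/3)"
definition reduced_budget_1 :: "nat \<Rightarrow> real" where
  "reduced_budget_1 = (\<lambda>v. if v \<le> 6 then 4/21 else 1/3)"
definition reduced_budget_2 :: "nat \<Rightarrow> real" where
  "reduced_budget_2 = (\<lambda>v. if v = 0 then 4/21 else if v \<le> 6 then 1/42 else 1/3)"

lemma reduced_equal_shares_member: "{0, 1, 3} \<in> equal_shares C\<^sub>x (N\<^sub>x - {9}) A\<^sub>x 3"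
proof -
  let ?N = "N\<^sub>x - {9}"
  have init: "(\<lambda>_. real 3 / real (card ?N)) = reduced_budget_0"
    unfolding reduced_budget_0_def example_voters_def by simp
  have step1: "mes_step1 C\<^sub>x ?N A\<^sub>x ([], reduced_budget_0) ([0], reduced_budget_1)"
  proof (rule mes_step1I[where \<rho> = "1/7"])
    show "1/7 \<le> \<rho>'" if "d \<in> C\<^sub>x - set []" "mes_rho_ok ?N A\<^sub>x reduced_budget_0 d \<rho>'" for d \<rho>'
    proof -
      have "card (supporters ?N A\<^sub>x d) \<le> 7" using that(1) unfolding example_candidates_def by auto
      then show ?thesis using mes_rho_lower_bound[OF that(2), of 7] by simp
    qed
  qed (auto simp: example_candidates_def mes_affordable_def mes_rho_ok_def
         reduced_budget_0_def reduced_budget_1_def fun_eq_iff)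
  have step2: "mes_step1 C\<^sub>x ?N A\<^sub>x ([0], reduced_budget_1) ([1, 0], reduced_budget_2)"
  proof (rule mes_step1I[where \<rho> = "1/6"])
    show "1/6 \<le> \<rho>'" if "d \<in> C\<^sub>x - set [0]" "mes_rho_ok ?N A\<^sub>x reduced_budget_1 d \<rho>'" for d \<rho>'
    proof -
      have "card (supporters ?N A\<^sub>x d) \<le> 6" using that(1) unfolding example_candidates_def by auto
      then show ?thesis using mes_rho_lower_bound[OF that(2), of 6] by simp
    qed
  qed (auto simp: example_candidates_def mes_affordable_def mes_rho_ok_def
         reduced_budget_1_def reduced_budget_2_def fun_eq_iff)
  have stop: "mes_phase1_done C\<^sub>x ?N A\<^sub>x ([1, 0], reduced_budget_2)"
    unfolding mes_phase1_done_def mes_affordable_def example_candidates_def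
    by (auto simp: reduced_budget_2_def)
  have "phrag_time ?N A\<^sub>x reduced_budget_2 2 = 11/210" "phrag_time ?N A\<^sub>x reduced_budget_2 3 = 1/21"
    unfolding phrag_time_def reduced_budget_2_def by simp_all
  then have "phragmen_step C\<^sub>x ?N A\<^sub>x ([1, 0], reduced_budget_2)
      ([3, 1, 0], \<lambda>j. if j \<in> supporters ?N A\<^sub>x 3 then 0 else reduced_budget_2 j + phrag_time ?N A\<^sub>x reduced_budget_2 3)"
    by (intro phragmen_stepI) (auto simp: example_candidates_def)
  then have "set [3, 1, 0] \<in> equal_shares C\<^sub>x ?N A\<^sub>x 3"
    using step1 step2 stop unfolding init[symmetric]
    by (intro equal_sharesI) (auto intro: converse_rtranclp_into_rtranclp)
  then show ?thesis by (simp add: insert_commute)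
qed

lemma equal_shares_not_participation:
  "\<exists>(C::nat set) (N::nat set) A k i.
     finite C \<and> 1 < card C \<and> valid_profile C N A \<and> 2 \<le> card N \<and> 1 \<le> k \<and> k < card C \<and> i \<in> N \<and>
     (\<forall>W\<in>equal_shares C N A k. W \<inter> A i = {}) \<and>
     kelly_strict (A i) (equal_shares C (N - {i}) A k) (equal_shares C N A k)"
proof (intro exI conjI)
  have A9: "A\<^sub>x 9 = {3}" unfolding example_ballots_def by simp
  show "finite C\<^sub>x" "1 < card C\<^sub>x" "3 < card C\<^sub>x" unfolding example_candidates_def by simp_all
  show "valid_profile C\<^sub>x N\<^sub>x A\<^sub>x"
    unfolding valid_profile_def example_candidates_def example_voters_def example_ballots_def by auto
  show "2 \<le> card N\<^sub>x" "(9::nat) \<in> N\<^sub>x" unfolding example_voters_def by simp_all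
  show "\<forall>W\<in>equal_shares C\<^sub>x N\<^sub>x A\<^sub>x 3. W \<inter> A\<^sub>x 9 = {}"
    unfolding full_equal_shares A9 by simp
  show "kelly_strict (A\<^sub>x 9) (equal_shares C\<^sub>x (N\<^sub>x - {9}) A\<^sub>x 3) (equal_shares C\<^sub>x N\<^sub>x A\<^sub>x 3)"
    using reduced_equal_shares_member unfolding kelly_strict_def full_equal_shares A9 by force
qed simp

theorem proposition1:
  shows "(\<forall>(s::nat \<Rightarrow> rat) (C::'a set). thiele_function s \<longrightarrow> finite C \<longrightarrow> 1 < card C \<longrightarrow>
            participation_unrepresented C (seq_thiele s :: ('a, 'v) abc_rule)) \<and>
         (\<forall>C::'a set. finite C \<longrightarrow> 1 < card C \<longrightarrow>
            participation_unrepresented C (seq_phragmen :: ('a, 'v) abc_rule)) \<and>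
         (\<exists>(C::nat set) (N::nat set) A k i.
            finite C \<and> 1 < card C \<and> valid_profile C N A \<and> 2 \<le> card N \<and> 1 \<le> k \<and> k < card C \<and> i \<in> N \<and>
            (\<forall>W\<in>equal_shares C N A k. W \<inter> A i = {}) \<and>
            kelly_strict (A i) (equal_shares C (N - {i}) A k) (equal_shares C N A k))"
  using seq_thiele_participation seq_phragmen_participation equal_shares_not_participation by blast

end
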